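(* For every $n\ge0$ there are numbers $C_n^A$, indexed by the subsets $A\subseteq\{a_1,\dots,a_k\}$, with $0<C_n^A<1$ for all $A$ and $\sum_A C_n^A=1$, such that for all $x,y$ $$L_n(x,y)=\sum_{A\subseteq\{a_1,\dots,a_k\}} C_n^A\Big[\prod_{a_i\in A}(x-a_i)(y-a_i)\Big]K^A_{n-|A|}(x,y),$$ where $|A|$ is the cardinality of $A$ and $K_m^A\equiv0$ for $m<0$.
   Context: Let $\mu$ be a positive Borel measure on $\mathbb R$ with infinitely many points of increase and all moments finite. Let $a_1,\dots,a_k\in\mathbb R$ be distinct with $\mu(\{a_i\})=0$, $M_i>0$, $\nu=\mu+\sum_{i=1}^kM_i\delta_{a_i}$. $L_n(x,y)=\sum_{j=0}^nP_j(x)P_j(y)$ where $(P_j)$ are the orthonormal polynomials (positive leading coefficients) for $\nu$. For $A\subseteq\{a_1,\dots,a_k\}$, $d\mu^A(x)=\prod_{a_i\in A}(x-a_i)^2\,d\mu(x)$ (so $\mu^\emptyset=\mu$), and $K_m^A(x,y)$ is the $m$-th kernel $\sum_{j=0}^m q_j(x)q_j(y)$ for the orthonormal polynomials $(q_j)$ of $\mu^A$. *)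

theory Defs
  imports "HOL-Analysis.Analysis" "HOL-Computational_Algebra.Polynomial"
begin

definition point_of_increase :: "real measure \<Rightarrow> real \<Rightarrow> bool" where
  "point_of_increase \<mu> x \<longleftrightarrow> (\<forall>e>0. emeasure \<mu> {x - e<..<x + e} > 0)"

definition add_masses :: "real measure \<Rightarrow> real set \<Rightarrow> (real \<Rightarrow> real) \<Rightarrow> real measure" where
  "add_masses \<mu> S M = measure_of (space \<mu>) (sets \<mu>)
     (\<lambda>B. emeasure \<mu> B + (\<Sum>a\<in>S. ennreal (M a) * indicator B a))"

definition mod_measure :: "real measure \<Rightarrow> real set \<Rightarrow> real measure" where
  "mod_measure \<mu> A = density \<mu> (\<lambda>x. ennreal (\<Prod>a\<in>A. (x - a)^2))"

definition is_orthonormal_polys :: "real measure \<Rightarrow> (nat \<Rightarrow> real poly) \<Rightarrow> bool" where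
  "is_orthonormal_polys \<nu> P \<longleftrightarrow>
     (\<forall>j. degree (P j) = j \<and> lead_coeff (P j) > 0) \<and>
     (\<forall>i j. integrable \<nu> (\<lambda>x. poly (P i) x * poly (P j) x) \<and>
            integral\<^sup>L \<nu> (\<lambda>x. poly (P i) x * poly (P j) x) = (if i = j then 1 else 0))"

definition orthonormal_polys :: "real measure \<Rightarrow> nat \<Rightarrow> real poly" where
  "orthonormal_polys \<nu> = (SOME P. is_orthonormal_polys \<nu> P)"

definition kernel :: "real measure \<Rightarrow> int \<Rightarrow> real \<Rightarrow> real \<Rightarrow> real" where
  "kernel \<nu> m x y = (if m < 0 then 0 else
     (\<Sum>j\<le>nat m. poly (orthonormal_polys \<nu> j) x * poly (orthonormal_polys \<nu> j) y))"

end

theory Submission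
  imports Defs
begin

(* The kernel depends on the measure only through its moment functional L p = integral of p, and it
   can be characterised without orthonormal polynomials: K_n(x, .) is the unique polynomial k of
   degree <= n with L (k q) = q(x) for all q of degree <= n. Uniqueness needs L (p^2) > 0 for p ~= 0,
   which holds because mu has infinitely many points of increase; Gram-Schmidt gives existence.

   Adding a single mass M at b, this characterisation gives Uvarov's formula
     K'_n(x, .) = K_n(x, .) - M K_n(x, b) / (1 + M K_n(b, b)) K_n(b, .),
   while Christoffel's formula identifies K_n(x, .) - K_n(x, b) / K_n(b, b) K_n(b, .) with
   (x - b)(. - b) times the kernel of degree n - 1 of (t - b)^2 L. So K'_n is the combination
   (1 - c) K_n + c (x - b)(. - b) K^{b}_{n-1} with c = M K_n(b, b) / (1 + M K_n(b, b)) in (0, 1).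
   Multiplying L + (other masses) by (t - b)^2 turns each remaining mass M_a into M_a (a - b)^2 > 0,
   so induction on the set of masses yields the weights C^A as products of such c and 1 - c. *)

section \<open>Positive definite functionals on polynomials and their reproducing kernels\<close>

definition linear_functional :: "(real poly \<Rightarrow> real) \<Rightarrow> bool" where
  "linear_functional L \<longleftrightarrow>
     (\<forall>p q. L (p + q) = L p + L q) \<and> (\<forall>c p. L (smult c p) = c * L p)"

definition pos_def_functional :: "(real poly \<Rightarrow> real) \<Rightarrow> bool" where
  "pos_def_functional L \<longleftrightarrow> linear_functional L \<and> (\<forall>p. p \<noteq> 0 \<longrightarrow> L (p * p) > 0)"

lemma linear_functional_add: "linear_functional L \<Longrightarrow> L (p + q) = L p + L q"
  by (simp add: linear_functional_def)

lemma linear_functional_smult: "linear_functional L \<Longrightarrow> L (smult c p) = c * L p"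
  by (simp add: linear_functional_def)

lemma linear_functional_zero: "linear_functional L \<Longrightarrow> L 0 = 0"
  using linear_functional_smult[of L 0 0] by simp

lemma linear_functional_diff: "linear_functional L \<Longrightarrow> L (p - q) = L p - L q"
  using linear_functional_add[of L p "-q"] linear_functional_smult[of L "-1" q] by simp

lemma linear_functional_sum: "linear_functional L \<Longrightarrow> L (\<Sum>i\<in>I. f i) = (\<Sum>i\<in>I. L (f i))"
  by (induction I rule: infinite_finite_induct) (auto simp: linear_functional_zero linear_functional_add)

lemmas linear_functional_simps =
  linear_functional_add linear_functional_smult linear_functional_diff linear_functional_sum

lemma pos_def_functional_linear: "pos_def_functional L \<Longrightarrow> linear_functional L"
  by (simp add: pos_def_functional_def)

lemma pos_def_functional_square_pos: "pos_def_functional L \<Longrightarrow> p \<noteq> 0 \<Longrightarrow> L (p * p) > 0"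
  by (simp add: pos_def_functional_def)

lemma pos_def_functional_orthogonal_eq_0:
  assumes "pos_def_functional L" "degree d \<le> n" "\<And>q. degree q \<le> n \<Longrightarrow> L (d * q) = 0"
  shows "d = 0"
  using assms pos_def_functional_square_pos[of L d] by force

definition is_reproducing_kernel :: "(real poly \<Rightarrow> real) \<Rightarrow> nat \<Rightarrow> real \<Rightarrow> real poly \<Rightarrow> bool" where
  "is_reproducing_kernel L n x k \<longleftrightarrow>
     degree k \<le> n \<and> (\<forall>q. degree q \<le> n \<longrightarrow> L (k * q) = poly q x)"

lemma is_reproducing_kernelD:
  "is_reproducing_kernel L n x k \<Longrightarrow> degree k \<le> n"
  "is_reproducing_kernel L n x k \<Longrightarrow> degree q \<le> n \<Longrightarrow> L (k * q) = poly q x"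
  by (simp_all add: is_reproducing_kernel_def)

lemma reproducing_kernel_unique:
  assumes L: "pos_def_functional L"
    and k: "is_reproducing_kernel L n x k" and k': "is_reproducing_kernel L n x k'"
  shows "k = k'"
proof -
  have "k - k' = 0"
  proof (rule pos_def_functional_orthogonal_eq_0[OF L])
    show "degree (k - k') \<le> n"
      using k k' by (meson degree_diff_le is_reproducing_kernelD(1))
    show "L ((k - k') * q) = 0" if "degree q \<le> n" for q
      using that k k' pos_def_functional_linear[OF L]
      by (simp add: left_diff_distrib linear_functional_diff is_reproducing_kernelD(2))
  qed
  then show ?thesis by simp
qed

definition orthonormal_system :: "(real poly \<Rightarrow> real) \<Rightarrow> (nat \<Rightarrow> real poly) \<Rightarrow> bool" where
  "orthonormal_system L P \<longleftrightarrow>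
     (\<forall>j. degree (P j) = j \<and> lead_coeff (P j) > 0) \<and>
     (\<forall>i j. L (P i * P j) = (if i = j then 1 else 0))"

lemma poly_in_span_of_degree_basis:
  fixes P :: "nat \<Rightarrow> 'a::field poly"
  assumes deg: "\<And>j. degree (P j) = j" and nz: "\<And>j. P j \<noteq> 0" and q: "degree q \<le> n"
  shows "\<exists>a. q = (\<Sum>j\<le>n. smult (a j) (P j))"
proof -
  have lc: "coeff (P j) j \<noteq> 0" for j
    using deg[of j] nz[of j] leading_coeff_0_iff by fastforce
  show ?thesis
    using q
  proof (induction n arbitrary: q)
    case 0
    have "q = smult (coeff q 0 / coeff (P 0) 0) (P 0)"
    proof (rule poly_eqI)
      fix i show "coeff q i = coeff (smult (coeff q 0 / coeff (P 0) 0) (P 0)) i"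
        using 0 deg[of 0] lc[of 0] by (cases i) (auto simp: coeff_eq_0)
    qed
    then show ?case by auto
  next
    case (Suc n)
    define c where "c = coeff q (Suc n) / lead_coeff (P (Suc n))"
    define q' where "q' = q - smult c (P (Suc n))"
    have "degree q' \<le> n"
    proof (rule degree_le, intro allI impI)
      fix i assume "n < i"
      then consider "i = Suc n" | "Suc n < i" by linarith
      then show "coeff q' i = 0"
        using Suc.prems deg[of "Suc n"] lc[of "Suc n"]
        by cases (auto simp: q'_def c_def coeff_eq_0)
    qed
    then obtain a where a: "q' = (\<Sum>j\<le>n. smult (a j) (P j))"
      using Suc.IH by blast
    have "q = (\<Sum>j\<le>Suc n. smult ((a(Suc n := c)) j) (P j))"
      using a by (simp add: q'_def algebra_simps)
    then show ?case by blast
  qed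
qed

lemma orthonormal_system_expansion:
  assumes L: "linear_functional L" and P: "orthonormal_system L P" and q: "degree q \<le> n"
  shows "q = (\<Sum>j\<le>n. smult (L (q * P j)) (P j))"
proof -
  have "\<And>j. degree (P j) = j" "\<And>j. P j \<noteq> 0"
    using P unfolding orthonormal_system_def by (metis leading_coeff_0_iff less_irrefl)+
  then obtain a where a: "q = (\<Sum>j\<le>n. smult (a j) (P j))"
    using poly_in_span_of_degree_basis q by blast
  have "L (q * P i) = a i" if "i \<le> n" for i
  proof -
    have "L (q * P i) = (\<Sum>j\<le>n. a j * L (P j * P i))"
      by (subst a) (simp add: L sum_distrib_right linear_functional_simps)
    also have "\<dots> = (\<Sum>j\<le>n. if j = i then a j else 0)"
      using P by (intro sum.cong) (auto simp: orthonormal_system_def)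
    also have "\<dots> = a i"
      using that by simp
    finally show ?thesis .
  qed
  then show ?thesis
    by (subst a) (intro sum.cong refl, simp)
qed

definition kernel_poly :: "(nat \<Rightarrow> real poly) \<Rightarrow> nat \<Rightarrow> real \<Rightarrow> real poly" where
  "kernel_poly P n x = (\<Sum>j\<le>n. smult (poly (P j) x) (P j))"

lemma kernel_poly_reproducing:
  assumes L: "linear_functional L" and P: "orthonormal_system L P"
  shows "is_reproducing_kernel L n x (kernel_poly P n x)"
  unfolding is_reproducing_kernel_def
proof safe
  show "degree (kernel_poly P n x) \<le> n"
    unfolding kernel_poly_def using P
    by (intro degree_sum_le) (auto simp: orthonormal_system_def intro: order.trans[OF degree_smult_le])
  fix q :: "real poly" assume q: "degree q \<le> n"
  have "L (kernel_poly P n x * q) = (\<Sum>j\<le>n. poly (P j) x * L (P j * q))"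
    unfolding kernel_poly_def by (simp add: L sum_distrib_right linear_functional_simps)
  also have "\<dots> = poly q x"
    by (subst (2) orthonormal_system_expansion[OF L P q]) (simp add: poly_sum mult.commute)
  finally show "L (kernel_poly P n x * q) = poly q x" .
qed

function gram_schmidt :: "(real poly \<Rightarrow> real) \<Rightarrow> nat \<Rightarrow> real poly" where
  "gram_schmidt L n =
     (let Q = monom 1 n - (\<Sum>j<n. smult (L (monom 1 n * gram_schmidt L j)) (gram_schmidt L j))
      in smult (1 / sqrt (L (Q * Q))) Q)"
  by auto
termination by (relation "Wellfounded.measure snd") auto

declare gram_schmidt.simps [simp del]

lemma gram_schmidt_orthonormal_upto:
  assumes L: "pos_def_functional L"
  shows "degree (gram_schmidt L n) = n \<and> lead_coeff (gram_schmidt L n) > 0 \<and>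
         (\<forall>j<n. L (gram_schmidt L n * gram_schmidt L j) = 0) \<and>
         L (gram_schmidt L n * gram_schmidt L n) = 1"
proof (induction n rule: less_induct)
  case (less n)
  let ?g = "gram_schmidt L"
  have lin: "linear_functional L" using L by (rule pos_def_functional_linear)
  have orth: "L (?g j * ?g i) = (if j = i then 1 else 0)" if "i < n" "j < n" for i j
    using less.IH[of i] less.IH[of j] that by (cases i j rule: linorder_cases) (auto simp: mult.commute)
  define c where "c j = L (monom 1 n * ?g j)" for j
  define Q where "Q = monom 1 n - (\<Sum>j<n. smult (c j) (?g j))"
  define s where "s = 1 / sqrt (L (Q * Q))"
  have g: "?g n = smult s Q"
    by (subst gram_schmidt.simps) (simp add: Let_def Q_def s_def c_def)
  have "degree (\<Sum>j<n. smult (c j) (?g j)) \<le> n"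
    using less.IH by (intro degree_sum_le) (auto intro: order.trans[OF degree_smult_le])
  moreover have "coeff (\<Sum>j<n. smult (c j) (?g j)) n = 0"
    using less.IH by (auto simp: coeff_sum intro!: sum.neutral coeff_eq_0)
  ultimately have cQ: "coeff Q n = 1" and dQ: "degree Q = n"
    unfolding Q_def by (auto simp: coeff_monom degree_monom_le intro!: antisym le_degree degree_diff_le)
  then have "Q \<noteq> 0" by auto
  then have QQ: "L (Q * Q) > 0" by (rule pos_def_functional_square_pos[OF L])
  then have s0: "s > 0" unfolding s_def by simp
  have "L (?g n * ?g i) = 0" if i: "i < n" for i
  proof -
    have "L (Q * ?g i) = c i - (\<Sum>j<n. c j * L (?g j * ?g i))"
      unfolding Q_def c_def
      by (simp add: lin left_diff_distrib sum_distrib_right linear_functional_simps mult.assoc)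
    also have "(\<Sum>j<n. c j * L (?g j * ?g i)) = (\<Sum>j<n. if j = i then c j else 0)"
      using i orth by (intro sum.cong) auto
    also have "\<dots> = c i"
      using i by simp
    finally show ?thesis using g lin by (simp add: linear_functional_smult)
  qed
  moreover have "L (?g n * ?g n) = 1"
    using g lin QQ by (simp add: linear_functional_smult s_def field_simps)
  ultimately show ?case using g dQ s0 cQ by simp
qed

lemma orthonormal_gram_schmidt: "pos_def_functional L \<Longrightarrow> orthonormal_system L (gram_schmidt L)"
  unfolding orthonormal_system_def
  using gram_schmidt_orthonormal_upto[of L]
  by (metis (no_types, lifting) linorder_neqE_nat mult.commute)

definition reproducing_kernel :: "(real poly \<Rightarrow> real) \<Rightarrow> int \<Rightarrow> real \<Rightarrow> real poly" where
  "reproducing_kernel L m x = (if m < 0 then 0 else kernel_poly (gram_schmidt L) (nat m) x)"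

lemma reproducing_kernel_neg [simp]: "m < 0 \<Longrightarrow> reproducing_kernel L m x = 0"
  by (simp add: reproducing_kernel_def)

lemma reproducing_kernel_is_reproducing:
  "pos_def_functional L \<Longrightarrow> is_reproducing_kernel L n x (reproducing_kernel L (int n) x)"
  unfolding reproducing_kernel_def
  by (simp add: kernel_poly_reproducing pos_def_functional_linear orthonormal_gram_schmidt)

lemma kernel_poly_eq_reproducing_kernel:
  "pos_def_functional L \<Longrightarrow> orthonormal_system L P \<Longrightarrow> kernel_poly P n x = reproducing_kernel L (int n) x"
  by (metis reproducing_kernel_unique reproducing_kernel_is_reproducing
      kernel_poly_reproducing pos_def_functional_linear)

lemma reproducing_kernel_diagonal_pos:
  assumes L: "pos_def_functional L"
  shows "poly (reproducing_kernel L (int n) b) b > 0"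
proof -
  let ?k = "reproducing_kernel L (int n) b"
  have k: "is_reproducing_kernel L n b ?k"
    using L by (rule reproducing_kernel_is_reproducing)
  have "L (?k * 1) = 1"
    using is_reproducing_kernelD(2)[OF k, of 1] by simp
  then have "?k \<noteq> 0"
    using linear_functional_zero[OF pos_def_functional_linear[OF L]] by auto
  then have "L (?k * ?k) > 0"
    by (rule pos_def_functional_square_pos[OF L])
  then show ?thesis
    using is_reproducing_kernelD[OF k] by simp
qed

lemma reproducing_kernel_unique_scaled:
  assumes L: "pos_def_functional L" and h: "degree h \<le> n"
    and rep: "\<And>q. degree q \<le> n \<Longrightarrow> L (h * q) = c * poly q x"
  shows "h = smult c (reproducing_kernel L (int n) x)"
proof -
  let ?k = "reproducing_kernel L (int n) x"
  have k: "is_reproducing_kernel L n x ?k"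
    using L by (rule reproducing_kernel_is_reproducing)
  have "h - smult c ?k = 0"
  proof (rule pos_def_functional_orthogonal_eq_0[OF L])
    show "degree (h - smult c ?k) \<le> n"
      using h k by (meson degree_diff_le degree_smult_le is_reproducing_kernelD(1) order.trans)
    show "L ((h - smult c ?k) * q) = 0" if "degree q \<le> n" for q
      using that rep k pos_def_functional_linear[OF L]
      by (simp add: left_diff_distrib linear_functional_diff linear_functional_smult is_reproducing_kernelD)
  qed
  then show ?thesis
    by simp
qed

section \<open>Adding point masses and multiplying by squares\<close>

definition add_masses_functional ::
    "(real poly \<Rightarrow> real) \<Rightarrow> real set \<Rightarrow> (real \<Rightarrow> real) \<Rightarrow> real poly \<Rightarrow> real" where
  "add_masses_functional L S M p = L p + (\<Sum>a\<in>S. M a * poly p a)"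

definition mod_functional :: "(real poly \<Rightarrow> real) \<Rightarrow> real set \<Rightarrow> real poly \<Rightarrow> real" where
  "mod_functional L A p = L (p * (\<Prod>a\<in>A. [:-a, 1:]^2))"

lemma add_masses_functional_empty [simp]: "add_masses_functional L {} M = L"
  by (simp add: add_masses_functional_def fun_eq_iff)

lemma mod_functional_empty [simp]: "mod_functional L {} = L"
  by (simp add: mod_functional_def fun_eq_iff)

lemma add_masses_functional_insert:
  "finite S \<Longrightarrow> b \<notin> S \<Longrightarrow>
     add_masses_functional L (insert b S) M = add_masses_functional (add_masses_functional L S M) {b} M"
  by (simp add: add_masses_functional_def fun_eq_iff algebra_simps)

lemma mod_functional_insert:
  "finite A \<Longrightarrow> b \<notin> A \<Longrightarrow> mod_functional (mod_functional L {b}) A = mod_functional L (insert b A)"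
  by (simp add: mod_functional_def fun_eq_iff mult_ac)

lemma mod_functional_add_masses_functional:
  "mod_functional (add_masses_functional L S M) {b} =
     add_masses_functional (mod_functional L {b}) S (\<lambda>a. M a * (a - b)^2)"
  by (simp add: mod_functional_def add_masses_functional_def fun_eq_iff algebra_simps power2_eq_square)

lemma pos_def_add_masses_functional:
  assumes L: "pos_def_functional L" and M: "\<And>a. a \<in> S \<Longrightarrow> M a \<ge> 0"
  shows "pos_def_functional (add_masses_functional L S M)"
proof -
  have "linear_functional (add_masses_functional L S M)"
    using pos_def_functional_linear[OF L]
    by (simp add: linear_functional_def add_masses_functional_def algebra_simps sum.distrib sum_distrib_left)
  moreover have "add_masses_functional L S M (p * p) > 0" if "p \<noteq> 0" for p
  proof -
    have "(\<Sum>a\<in>S. M a * poly (p * p) a) \<ge> 0"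
      using M by (intro sum_nonneg) simp
    then show ?thesis
      using pos_def_functional_square_pos[OF L that] by (simp add: add_masses_functional_def)
  qed
  ultimately show ?thesis
    by (simp add: pos_def_functional_def)
qed

lemma pos_def_mod_functional:
  assumes L: "pos_def_functional L" and A: "finite A"
  shows "pos_def_functional (mod_functional L A)"
proof -
  have "linear_functional (mod_functional L A)"
    using pos_def_functional_linear[OF L]
    by (simp add: linear_functional_def mod_functional_def algebra_simps)
  moreover have "mod_functional L A (p * p) > 0" if "p \<noteq> 0" for p
  proof -
    define r where "r = (\<Prod>a\<in>A. [:-a, 1:])"
    have "r \<noteq> 0"
      using A by (simp add: r_def)
    moreover have "(\<Prod>a\<in>A. [:-a, 1:]^2) = r * r"
      by (simp only: r_def power2_eq_square prod.distrib)
    then have "mod_functional L A (p * p) = L ((p * r) * (p * r))"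
      by (simp add: mod_functional_def mult_ac)
    ultimately show ?thesis
      using pos_def_functional_square_pos[OF L] that by auto
  qed
  ultimately show ?thesis
    by (simp add: pos_def_functional_def)
qed

lemma reproducing_kernel_add_point_mass:
  fixes n :: nat
  assumes L: "pos_def_functional L" and M: "M b \<ge> 0"
  defines "k \<equiv> reproducing_kernel L (int n)"
  shows "reproducing_kernel (add_masses_functional L {b} M) (int n) x =
           k x - smult (M b * poly (k x) b / (1 + M b * poly (k b) b)) (k b)"
proof -
  let ?L' = "add_masses_functional L {b} M"
  have L': "pos_def_functional ?L'"
    using L M by (intro pos_def_add_masses_functional) auto
  define \<alpha> where "\<alpha> = M b * poly (k x) b / (1 + M b * poly (k b) b)"
  have kx: "is_reproducing_kernel L n x (k x)" and kb: "is_reproducing_kernel L n b (k b)"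
    unfolding k_def using L by (auto intro: reproducing_kernel_is_reproducing)
  have "0 < poly (k b) b"
    unfolding k_def using L by (rule reproducing_kernel_diagonal_pos)
  then have "1 + M b * poly (k b) b > 0"
    using M by (simp add: add_pos_nonneg)
  then have \<alpha>: "M b * (poly (k x) b - \<alpha> * poly (k b) b) = \<alpha>"
    unfolding \<alpha>_def by (simp add: field_simps)
  define F where "F = k x - smult \<alpha> (k b)"
  have "is_reproducing_kernel ?L' n x F"
    unfolding is_reproducing_kernel_def
  proof safe
    show "degree F \<le> n"
      unfolding F_def using kx kb
      by (meson degree_diff_le degree_smult_le is_reproducing_kernelD(1) order.trans)
    fix q :: "real poly" assume q: "degree q \<le> n"
    have "?L' (F * q) = L (F * q) + M b * poly F b * poly q b"
      by (simp add: add_masses_functional_def)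
    also have "\<dots> = poly q x - \<alpha> * poly q b + M b * (poly (k x) b - \<alpha> * poly (k b) b) * poly q b"
      using kx kb q pos_def_functional_linear[OF L] unfolding F_def
      by (simp add: left_diff_distrib linear_functional_diff linear_functional_smult is_reproducing_kernelD)
    also have "\<dots> = poly q x"
      using \<alpha> by simp
    finally show "?L' (F * q) = poly q x" .
  qed
  then show ?thesis
    unfolding F_def \<alpha>_def
    using reproducing_kernel_unique[OF L' reproducing_kernel_is_reproducing[OF L']] by blast
qed

lemma reproducing_kernel_mod_point:
  fixes n :: nat
  assumes L: "pos_def_functional L"
  defines "k \<equiv> reproducing_kernel L (int n)"
  shows "smult (x - b) ([:-b, 1:] * reproducing_kernel (mod_functional L {b}) (int n - 1) x) =
           k x - smult (poly (k x) b / poly (k b) b) (k b)"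
proof -
  let ?Lb = "mod_functional L {b}"
  define H where "H = k x - smult (poly (k x) b / poly (k b) b) (k b)"
  have kx: "is_reproducing_kernel L n x (k x)" and kb: "is_reproducing_kernel L n b (k b)"
    unfolding k_def using L by (auto intro: reproducing_kernel_is_reproducing)
  have "0 < poly (k b) b"
    unfolding k_def using L by (rule reproducing_kernel_diagonal_pos)
  then have "poly H b = 0"
    by (simp add: H_def)
  define h where "h = synthetic_div H b"
  have Hh: "H = [:-b, 1:] * h"
    using synthetic_div_correct'[of b H] \<open>poly H b = 0\<close> by (simp add: h_def)
  have dH: "degree H \<le> n"
    unfolding H_def using kx kb
    by (meson degree_diff_le degree_smult_le is_reproducing_kernelD(1) order.trans)
  have "h = smult (x - b) (reproducing_kernel ?Lb (int n - 1) x)"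
  proof (cases n)
    case 0
    then show ?thesis
      using dH \<open>poly H b = 0\<close> by (auto simp: h_def elim!: degree_eq_zeroE)
  next
    case (Suc m)
    have Lb: "pos_def_functional ?Lb"
      using L by (simp add: pos_def_mod_functional)
    have "h = smult (x - b) (reproducing_kernel ?Lb (int m) x)"
    proof (rule reproducing_kernel_unique_scaled[OF Lb])
      show "degree h \<le> m"
        using dH Suc by (simp add: h_def degree_synthetic_div)
      fix s :: "real poly" assume s: "degree s \<le> m"
      define q where "q = [:-b, 1:] * s"
      have q: "degree q \<le> n"
        using s Suc degree_mult_le[of "[:-b, 1:]" s] by (simp add: q_def)
      have "(\<Prod>a\<in>{b}. [:-a, 1:]^2) = [:-b, 1:] * [:-b, 1:]"
        by (simp add: power2_eq_square)
      then have "?Lb (h * s) = L (H * q)"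
        by (simp only: mod_functional_def Hh q_def mult_ac)
      also have "\<dots> = poly q x - poly (k x) b / poly (k b) b * poly q b"
        using kx kb q pos_def_functional_linear[OF L] unfolding H_def
        by (simp add: left_diff_distrib linear_functional_diff linear_functional_smult
            is_reproducing_kernelD)
      also have "\<dots> = (x - b) * poly s x"
        by (simp add: q_def algebra_simps)
      finally show "?Lb (h * s) = (x - b) * poly s x" .
    qed
    then show ?thesis
      using Suc by simp
  qed
  then show ?thesis
    using Hh by (simp add: H_def mult.commute)
qed

lemma reproducing_kernel_add_point_mass_convex:
  fixes m :: int
  assumes L: "pos_def_functional L" and M: "M b > 0"
  obtains c where "0 < c" "c < 1"
    and "\<And>x. reproducing_kernel (add_masses_functional L {b} M) m x =
           smult (1 - c) (reproducing_kernel L m x) +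
           smult (c * (x - b)) ([:-b, 1:] * reproducing_kernel (mod_functional L {b}) (m - 1) x)"
proof (cases "m < 0")
  case True
  then show ?thesis
    by (intro that[of "1/2"]) simp_all
next
  case False
  then obtain n where m: "m = int n"
    by (metis nonneg_int_cases not_less)
  define k where "k = reproducing_kernel L (int n)"
  define K where "K = poly (k b) b"
  have K: "K > 0"
    unfolding K_def k_def using L by (rule reproducing_kernel_diagonal_pos)
  define c where "c = M b * K / (1 + M b * K)"
  have MK: "M b * K > 0"
    using M K by simp
  have "0 < c" "c < 1"
    unfolding c_def using MK by (simp_all add: field_simps)
  moreover have "reproducing_kernel (add_masses_functional L {b} M) m x =
      smult (1 - c) (k x) +
      smult (c * (x - b)) ([:-b, 1:] * reproducing_kernel (mod_functional L {b}) (m - 1) x)"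
    for x
  proof -
    have "reproducing_kernel (add_masses_functional L {b} M) m x =
        k x - smult (M b * poly (k x) b / (1 + M b * K)) (k b)"
      using reproducing_kernel_add_point_mass[where L = L and M = M and b = b and n = n and x = x] L M
      by (simp add: m k_def K_def)
    also have "M b * poly (k x) b / (1 + M b * K) = c * (poly (k x) b / K)"
      using K MK by (simp add: c_def field_simps add_pos_pos)
    also have "k x - smult (c * (poly (k x) b / K)) (k b) =
        smult (1 - c) (k x) + smult c (k x - smult (poly (k x) b / K) (k b))"
      by (intro poly_eqI) (simp add: algebra_simps)
    also have "k x - smult (poly (k x) b / K) (k b) =
        smult (x - b) ([:-b, 1:] * reproducing_kernel (mod_functional L {b}) (m - 1) x)"
      using reproducing_kernel_mod_point[OF L, where n = n and x = x and b = b] by (simp add: m k_def K_def)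
    finally show ?thesis
      by simp
  qed
  ultimately show ?thesis
    using that unfolding m k_def by blast
qed

definition mod_kernel_sum ::
    "(real poly \<Rightarrow> real) \<Rightarrow> real set \<Rightarrow> (real set \<Rightarrow> real) \<Rightarrow> int \<Rightarrow> real \<Rightarrow> real \<Rightarrow> real" where
  "mod_kernel_sum L S C n x y =
     (\<Sum>A\<in>Pow S. C A * (\<Prod>a\<in>A. (x - a) * (y - a)) *
        poly (reproducing_kernel (mod_functional L A) (n - int (card A)) x) y)"

lemma mod_kernel_sum_scaled:
  "(\<And>A. A \<in> Pow S \<Longrightarrow> C A = c * C' A) \<Longrightarrow>
     mod_kernel_sum L S C n x y = c * mod_kernel_sum L S C' n x y"
  unfolding mod_kernel_sum_def sum_distrib_left by (intro sum.cong) auto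

lemma sum_Pow_insert:
  assumes "finite S" "b \<notin> S"
  shows "(\<Sum>A\<in>Pow (insert b S). f A) = (\<Sum>A\<in>Pow S. f A) + (\<Sum>A\<in>Pow S. f (insert b A))"
proof -
  have "inj_on (insert b) (Pow S)"
    using assms(2) by (intro inj_onI) (metis PowD insert_ident subsetD)
  moreover have "Pow S \<inter> insert b ` Pow S = {}"
    using assms(2) by blast
  ultimately show ?thesis
    using assms(1) by (simp add: Pow_insert sum.union_disjoint sum.reindex)
qed

lemma mod_kernel_sum_insert:
  assumes S: "finite S" "b \<notin> S"
  shows "mod_kernel_sum L (insert b S) C n x y =
           mod_kernel_sum L S C n x y +
           (x - b) * (y - b) * mod_kernel_sum (mod_functional L {b}) S (\<lambda>A. C (insert b A)) (n - 1) x y"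
proof -
  have "finite A" "b \<notin> A" if "A \<in> Pow S" for A
    using that S finite_subset by auto
  then show ?thesis
    unfolding mod_kernel_sum_def sum_Pow_insert[OF S] sum_distrib_left
    by (intro arg_cong2[where f = "(+)"] sum.cong refl) (simp_all add: mod_functional_insert algebra_simps)
qed

definition kernel_decomposition ::
    "(real poly \<Rightarrow> real) \<Rightarrow> real set \<Rightarrow> (real \<Rightarrow> real) \<Rightarrow> int \<Rightarrow> (real set \<Rightarrow> real) \<Rightarrow> bool" where
  "kernel_decomposition L S M n C \<longleftrightarrow>
     (\<forall>A\<in>Pow S. C A > 0) \<and> (\<Sum>A\<in>Pow S. C A) = 1 \<and>
     (\<forall>x y. poly (reproducing_kernel (add_masses_functional L S M) n x) y = mod_kernel_sum L S C n x y)"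

lemma kernel_decomposition_empty: "kernel_decomposition L {} M n (\<lambda>_. 1)"
  by (simp add: kernel_decomposition_def mod_kernel_sum_def)

definition insert_weights ::
    "real \<Rightarrow> real \<Rightarrow> (real set \<Rightarrow> real) \<Rightarrow> (real set \<Rightarrow> real) \<Rightarrow> real set \<Rightarrow> real" where
  "insert_weights b c C1 C2 A = (if b \<in> A then c * C2 (A - {b}) else (1 - c) * C1 A)"

lemma insert_weights_simps:
  assumes "A \<subseteq> S" "b \<notin> S"
  shows "insert_weights b c C1 C2 A = (1 - c) * C1 A"
    and "insert_weights b c C1 C2 (insert b A) = c * C2 A"
proof -
  have "b \<notin> A"
    using assms by auto
  then show "insert_weights b c C1 C2 A = (1 - c) * C1 A"
    and "insert_weights b c C1 C2 (insert b A) = c * C2 A"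
    by (simp_all add: insert_weights_def Diff_insert_absorb)
qed

lemma insert_weights_pos:
  assumes "b \<notin> S" "0 < c" "c < 1" "\<forall>A\<in>Pow S. C1 A > 0" "\<forall>A\<in>Pow S. C2 A > 0"
  shows "\<forall>A\<in>Pow (insert b S). insert_weights b c C1 C2 A > 0"
  unfolding Pow_insert using assms by (auto simp: insert_weights_simps)

lemma sum_insert_weights:
  assumes "finite S" "b \<notin> S" "(\<Sum>A\<in>Pow S. C1 A) = 1" "(\<Sum>A\<in>Pow S. C2 A) = 1"
  shows "(\<Sum>A\<in>Pow (insert b S). insert_weights b c C1 C2 A) = 1"
proof -
  have "(\<Sum>A\<in>Pow S. insert_weights b c C1 C2 A) = (1 - c) * (\<Sum>A\<in>Pow S. C1 A)"
    and "(\<Sum>A\<in>Pow S. insert_weights b c C1 C2 (insert b A)) = c * (\<Sum>A\<in>Pow S. C2 A)"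
    using assms(2) unfolding sum_distrib_left by (auto simp: insert_weights_simps intro!: sum.cong)
  then show ?thesis
    using assms by (simp add: sum_Pow_insert)
qed

lemma mod_kernel_sum_insert_weights:
  assumes S: "finite S" "b \<notin> S"
  shows "mod_kernel_sum L (insert b S) (insert_weights b c C1 C2) n x y =
           (1 - c) * mod_kernel_sum L S C1 n x y +
           c * (x - b) * (y - b) * mod_kernel_sum (mod_functional L {b}) S C2 (n - 1) x y"
  using mod_kernel_sum_scaled[of S "insert_weights b c C1 C2" "1 - c" C1]
    mod_kernel_sum_scaled[of S "\<lambda>A. insert_weights b c C1 C2 (insert b A)" c C2] S
  by (simp add: mod_kernel_sum_insert insert_weights_simps)

lemma kernel_decomposition_insert:
  assumes S: "finite S" "b \<notin> S" and L: "pos_def_functional L"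
    and M: "M b > 0" "\<And>a. a \<in> S \<Longrightarrow> M a \<ge> 0"
    and C1: "kernel_decomposition L S M n C1"
    and C2: "kernel_decomposition (mod_functional L {b}) S (\<lambda>a. M a * (a - b)^2) (n - 1) C2"
  shows "\<exists>C. kernel_decomposition L (insert b S) M n C"
proof -
  let ?L1 = "add_masses_functional L S M"
  have "pos_def_functional ?L1"
    using L M(2) by (rule pos_def_add_masses_functional)
  then obtain c where c: "0 < c" "c < 1"
    and K1: "\<And>x. reproducing_kernel (add_masses_functional ?L1 {b} M) n x =
       smult (1 - c) (reproducing_kernel ?L1 n x) +
       smult (c * (x - b)) ([:-b, 1:] * reproducing_kernel (mod_functional ?L1 {b}) (n - 1) x)"
    using reproducing_kernel_add_point_mass_convex M(1) by blast
  have C1_ker: "\<And>x y. poly (reproducing_kernel ?L1 n x) y = mod_kernel_sum L S C1 n x y"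
    and C2_ker: "\<And>x y. poly (reproducing_kernel (add_masses_functional (mod_functional L {b}) S
        (\<lambda>a. M a * (a - b)^2)) (n - 1) x) y = mod_kernel_sum (mod_functional L {b}) S C2 (n - 1) x y"
    using C1 C2 by (simp_all add: kernel_decomposition_def)
  have "poly (reproducing_kernel (add_masses_functional L (insert b S) M) n x) y =
      mod_kernel_sum L (insert b S) (insert_weights b c C1 C2) n x y" for x y
    unfolding add_masses_functional_insert[OF S] mod_kernel_sum_insert_weights[OF S]
    by (simp add: K1 mod_functional_add_masses_functional C1_ker C2_ker algebra_simps)
  then have "kernel_decomposition L (insert b S) M n (insert_weights b c C1 C2)"
    using C1 C2 c S
    by (simp add: kernel_decomposition_def insert_weights_pos sum_insert_weights)
  then show ?thesis
    by blast
qed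

lemma kernel_decomposition_exists:
  assumes "finite S" "pos_def_functional L" "\<And>a. a \<in> S \<Longrightarrow> M a > 0"
  shows "\<exists>C. kernel_decomposition L S M n C"
  using assms
proof (induction S arbitrary: L M n rule: finite_induct)
  case empty
  show ?case
    using kernel_decomposition_empty by blast
next
  case (insert b S)
  have "pos_def_functional (mod_functional L {b})"
    using insert.prems(1) by (simp add: pos_def_mod_functional)
  moreover have "M a * (a - b)^2 > 0" if "a \<in> S" for a
    using that insert.hyps(2) insert.prems(2)[of a] by (cases "a = b") auto
  ultimately obtain C1 C2 where C1: "kernel_decomposition L S M n C1"
      and C2: "kernel_decomposition (mod_functional L {b}) S (\<lambda>a. M a * (a - b)^2) (n - 1) C2"
    using insert.IH[of L M n] insert.IH[of "mod_functional L {b}" "\<lambda>a. M a * (a - b)^2" "n - 1"]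
      insert.prems by auto
  have "M b > 0" "\<And>a. a \<in> S \<Longrightarrow> M a \<ge> 0"
    using insert.prems(2) by (auto intro: less_imp_le)
  then show ?case
    using kernel_decomposition_insert[OF insert.hyps insert.prems(1) _ _ C1 C2] by blast
qed

section \<open>From measures to moment functionals\<close>

definition integral_functional :: "real measure \<Rightarrow> real poly \<Rightarrow> real" where
  "integral_functional \<nu> p = integral\<^sup>L \<nu> (\<lambda>x. poly p x)"

lemma integral_functional_mult:
  "integral_functional \<nu> (p * q) = integral\<^sup>L \<nu> (\<lambda>x. poly p x * poly q x)"
  by (simp add: integral_functional_def)

lemma integrable_poly:
  fixes \<mu> :: "real measure"
  assumes "\<And>k::nat. integrable \<mu> (\<lambda>x. x ^ k)"
  shows "integrable \<mu> (\<lambda>x. poly p x)"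
  using assms by (simp add: poly_altdef)

lemma linear_integral_functional:
  assumes "\<And>p. integrable \<nu> (\<lambda>x. poly p x)"
  shows "linear_functional (integral_functional \<nu>)"
  using assms by (simp add: linear_functional_def integral_functional_def)

lemma integral_poly_square_pos:
  fixes \<mu> :: "real measure"
  assumes sets_mu: "sets \<mu> = sets borel"
    and int: "integrable \<mu> (\<lambda>x. poly p x * poly p x)"
    and x0: "point_of_increase \<mu> x0" and px0: "poly p x0 \<noteq> 0"
  shows "integral\<^sup>L \<mu> (\<lambda>x. poly p x * poly p x) > 0"
proof -
  obtain e where "e > 0" and nz: "\<And>y. \<bar>x0 - y\<bar> < e \<Longrightarrow> poly p y \<noteq> 0"
    using LIM_fun_not_zero[OF poly_isCont[unfolded isCont_def] px0] px0 by metis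
  have "\<not> (AE x in \<mu>. poly p x * poly p x = 0)"
  proof
    assume "AE x in \<mu>. poly p x * poly p x = 0"
    then obtain N where N: "{x \<in> space \<mu>. poly p x * poly p x \<noteq> 0} \<subseteq> N" "emeasure \<mu> N = 0" "N \<in> sets \<mu>"
      by (rule AE_E)
    have "{x0 - e<..<x0 + e} \<subseteq> N"
      using N(1) nz sets_eq_imp_space_eq[OF sets_mu] by (force simp: abs_if)
    then have "emeasure \<mu> {x0 - e<..<x0 + e} = 0"
      using N(2,3) emeasure_mono[of "{x0 - e<..<x0 + e}" N \<mu>] by simp
    with x0 \<open>e > 0\<close> show False
      unfolding point_of_increase_def by force
  qed
  moreover have "integral\<^sup>L \<mu> (\<lambda>x. poly p x * poly p x) \<ge> 0"
    by simp
  ultimately show ?thesis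
    using integral_nonneg_eq_0_iff_AE[OF int AE_I2[OF zero_le_square]] by linarith
qed

lemma pos_def_integral_functional:
  fixes \<mu> :: "real measure"
  assumes sets_mu: "sets \<mu> = sets borel"
    and incr: "infinite {x. point_of_increase \<mu> x}"
    and moments: "\<And>k::nat. integrable \<mu> (\<lambda>x. x ^ k)"
  shows "pos_def_functional (integral_functional \<mu>)"
proof -
  have "integral_functional \<mu> (p * p) > 0" if "p \<noteq> 0" for p
  proof -
    have "infinite ({x. point_of_increase \<mu> x} - {x. poly p x = 0})"
      using Diff_infinite_finite[OF poly_roots_finite[OF that] incr] .
    then obtain x0 where "point_of_increase \<mu> x0" "poly p x0 \<noteq> 0"
      by (auto dest!: infinite_imp_nonempty)
    then show ?thesis
      unfolding integral_functional_mult
      using integral_poly_square_pos[OF sets_mu] integrable_poly[OF moments, of "p * p"] by simp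
  qed
  then show ?thesis
    using linear_integral_functional[OF integrable_poly[OF moments]]
    by (simp add: pos_def_functional_def)
qed

lemma is_orthonormal_polys_iff:
  assumes "\<And>p. integrable \<nu> (\<lambda>x. poly p x)"
  shows "is_orthonormal_polys \<nu> P \<longleftrightarrow> orthonormal_system (integral_functional \<nu>) P"
  using assms[of "P _ * P _"]
  by (simp add: is_orthonormal_polys_def orthonormal_system_def integral_functional_mult)

lemma kernel_eq_reproducing_kernel:
  assumes int: "\<And>p. integrable \<nu> (\<lambda>x. poly p x)"
    and L: "pos_def_functional (integral_functional \<nu>)"
  shows "kernel \<nu> m x y = poly (reproducing_kernel (integral_functional \<nu>) m x) y"
proof (cases "m < 0")
  case True
  then show ?thesis
    by (simp add: kernel_def)
next
  case False
  have "is_orthonormal_polys \<nu> (gram_schmidt (integral_functional \<nu>))"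
    using L int by (simp add: is_orthonormal_polys_iff orthonormal_gram_schmidt)
  then have "is_orthonormal_polys \<nu> (orthonormal_polys \<nu>)"
    unfolding orthonormal_polys_def by (rule someI[where P = "is_orthonormal_polys \<nu>"])
  then have "orthonormal_system (integral_functional \<nu>) (orthonormal_polys \<nu>)"
    using int by (simp add: is_orthonormal_polys_iff)
  then have "kernel_poly (orthonormal_polys \<nu>) (nat m) x = reproducing_kernel (integral_functional \<nu>) m x"
    using False L by (simp add: kernel_poly_eq_reproducing_kernel)
  moreover have "kernel \<nu> m x y = poly (kernel_poly (orthonormal_polys \<nu>) (nat m) x) y"
    using False by (simp add: kernel_def kernel_poly_def poly_sum)
  ultimately show ?thesis
    by simp
qed

lemma sets_add_masses: "sets (add_masses \<mu> S M) = sets \<mu>"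
  unfolding add_masses_def using sets.space_closed[of \<mu>] by (simp add: sets.sigma_sets_eq)

lemma emeasure_add_masses:
  assumes B: "B \<in> sets \<mu>"
  shows "emeasure (add_masses \<mu> S M) B = emeasure \<mu> B + (\<Sum>a\<in>S. ennreal (M a) * indicator B a)"
  unfolding add_masses_def
proof (rule emeasure_measure_of_sigma[OF sets.sigma_algebra_axioms _ _ B])
  show "positive (sets \<mu>) (\<lambda>B. emeasure \<mu> B + (\<Sum>a\<in>S. ennreal (M a) * indicator B a))"
    unfolding positive_def by simp
  show "countably_additive (sets \<mu>) (\<lambda>B. emeasure \<mu> B + (\<Sum>a\<in>S. ennreal (M a) * indicator B a))"
    unfolding countably_additive_def
  proof safe
    fix A :: "nat \<Rightarrow> _" assume A: "range A \<subseteq> sets \<mu>" "disjoint_family A" "\<Union> (range A) \<in> sets \<mu>"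
    have "(\<Sum>i. emeasure \<mu> (A i) + (\<Sum>a\<in>S. ennreal (M a) * indicator (A i) a))
        = (\<Sum>i. emeasure \<mu> (A i)) + (\<Sum>i. \<Sum>a\<in>S. ennreal (M a) * indicator (A i) a)"
      by (rule suminf_add[symmetric]) auto
    also have "(\<Sum>i. emeasure \<mu> (A i)) = emeasure \<mu> (\<Union> (range A))"
      using suminf_emeasure[OF A(1,2)] by simp
    also have "(\<Sum>i. \<Sum>a\<in>S. ennreal (M a) * indicator (A i) a) =
        (\<Sum>a\<in>S. \<Sum>i. ennreal (M a) * indicator (A i) a)"
      by (rule suminf_sum) auto
    also have "\<dots> = (\<Sum>a\<in>S. ennreal (M a) * indicator (\<Union> (range A)) a)"
      using suminf_indicator[OF A(2)] by simp
    finally show "(\<Sum>i. emeasure \<mu> (A i) + (\<Sum>a\<in>S. ennreal (M a) * indicator (A i) a)) =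
       emeasure \<mu> (\<Union> (range A)) + (\<Sum>a\<in>S. ennreal (M a) * indicator (\<Union> (range A)) a)" .
  qed
qed

lemma measurable_add_masses: "borel_measurable (add_masses \<mu> S M) = borel_measurable \<mu>"
  by (rule measurable_cong_sets[OF sets_add_masses refl])

lemma nn_integral_add_masses:
  assumes u: "u \<in> borel_measurable \<mu>" and sp: "space \<mu> = UNIV"
  shows "(\<integral>\<^sup>+x. u x \<partial>add_masses \<mu> S M) = (\<integral>\<^sup>+x. u x \<partial>\<mu>) + (\<Sum>a\<in>S. ennreal (M a) * u a)"
  using u
proof (induction rule: borel_measurable_induct)
  case (cong f g)
  then have "f = g" using sp by auto
  then show ?case using cong by simp
next
  case (set A)
  then show ?case using emeasure_add_masses[OF set] sets_add_masses[of \<mu> S M] by simp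
next
  case (mult u c)
  have "(\<integral>\<^sup>+x. c * u x \<partial>add_masses \<mu> S M) = c * (\<integral>\<^sup>+x. u x \<partial>add_masses \<mu> S M)"
    using mult(2) by (intro nn_integral_cmult) (simp add: measurable_add_masses)
  also have "\<dots> = c * (\<integral>\<^sup>+x. u x \<partial>\<mu>) + (\<Sum>a\<in>S. ennreal (M a) * (c * u a))"
    using mult(4) by (simp add: distrib_left sum_distrib_left mult_ac)
  also have "c * (\<integral>\<^sup>+x. u x \<partial>\<mu>) = (\<integral>\<^sup>+x. c * u x \<partial>\<mu>)"
    using mult(2) by (intro nn_integral_cmult[symmetric])
  finally show ?case .
next
  case (add u v)
  have "(\<integral>\<^sup>+x. v x + u x \<partial>add_masses \<mu> S M) =
      (\<integral>\<^sup>+x. v x \<partial>add_masses \<mu> S M) + (\<integral>\<^sup>+x. u x \<partial>add_masses \<mu> S M)"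
    using add by (intro nn_integral_add) (simp_all add: measurable_add_masses)
  also have "\<dots> = ((\<integral>\<^sup>+x. v x \<partial>\<mu>) + (\<integral>\<^sup>+x. u x \<partial>\<mu>)) + (\<Sum>a\<in>S. ennreal (M a) * (v a + u a))"
    using add by (simp add: distrib_left sum.distrib add_ac)
  also have "(\<integral>\<^sup>+x. v x \<partial>\<mu>) + (\<integral>\<^sup>+x. u x \<partial>\<mu>) = (\<integral>\<^sup>+x. v x + u x \<partial>\<mu>)"
    using add by (intro nn_integral_add[symmetric]) simp_all
  finally show ?case .
next
  case (seq U)
  have incI: "incseq (\<lambda>i. \<integral>\<^sup>+x. U i x \<partial>\<mu>)"
    using seq unfolding incseq_def le_fun_def by (auto intro!: nn_integral_mono)
  have incP: "incseq (\<lambda>i. ennreal (M a) * U i a)" for a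
    using seq unfolding incseq_def le_fun_def by (auto intro!: mult_left_mono)
  have incS: "incseq (\<lambda>i. \<Sum>a\<in>S. ennreal (M a) * U i a)"
    using incP unfolding incseq_def by (auto intro!: sum_mono)
  have "(\<integral>\<^sup>+x. (SUP i. U i) x \<partial>add_masses \<mu> S M) = (\<integral>\<^sup>+x. (SUP i. U i x) \<partial>add_masses \<mu> S M)"
    by (simp add: SUP_apply image_comp)
  also have "\<dots> = (SUP i. \<integral>\<^sup>+x. U i x \<partial>add_masses \<mu> S M)"
    using seq by (intro nn_integral_monotone_convergence_SUP) (simp_all add: measurable_add_masses)
  also have "\<dots> = (SUP i. (\<integral>\<^sup>+x. U i x \<partial>\<mu>) + (\<Sum>a\<in>S. ennreal (M a) * U i a))"
    using seq by simp
  also have "\<dots> = (SUP i. \<integral>\<^sup>+x. U i x \<partial>\<mu>) + (SUP i. \<Sum>a\<in>S. ennreal (M a) * U i a)"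
    using incI incS by (rule ennreal_SUP_add)
  also have "(SUP i. \<integral>\<^sup>+x. U i x \<partial>\<mu>) = (\<integral>\<^sup>+x. (SUP i. U i x) \<partial>\<mu>)"
    using seq by (intro nn_integral_monotone_convergence_SUP[symmetric]) simp_all
  also have "(SUP i. \<Sum>a\<in>S. ennreal (M a) * U i a) = (\<Sum>a\<in>S. SUP i. ennreal (M a) * U i a)"
    using incP by (intro ennreal_SUP_sum) simp
  also have "\<dots> = (\<Sum>a\<in>S. ennreal (M a) * (SUP i. U i a))"
    by (simp add: SUP_mult_left_ennreal)
  finally show ?case by (simp add: SUP_apply image_comp)
qed

lemma sum_masses_ennreal:
  assumes "\<And>a. a \<in> S \<Longrightarrow> M a \<ge> 0"
  shows "(\<Sum>a\<in>S. ennreal (M a) * ennreal (g a)) = ennreal (\<Sum>a\<in>S. M a * max 0 (g a))"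
proof -
  have "ennreal (M a) * ennreal (g a) = ennreal (M a * max 0 (g a))" if "a \<in> S" for a
    using assms[OF that] by (cases "g a \<ge> 0") (auto simp: ennreal_mult ennreal_neg)
  then show ?thesis
    using assms by (simp add: sum_ennreal cong: sum.cong)
qed

lemma integrable_add_masses:
  fixes f :: "real \<Rightarrow> real"
  assumes f: "integrable \<mu> f" and sp: "space \<mu> = UNIV" and S: "finite S"
  shows "integrable (add_masses \<mu> S M) f"
  unfolding integrable_iff_bounded
proof
  show "f \<in> borel_measurable (add_masses \<mu> S M)"
    using f by (simp add: measurable_add_masses)
  have "(\<integral>\<^sup>+x. ennreal (norm (f x)) \<partial>add_masses \<mu> S M) =
      (\<integral>\<^sup>+x. ennreal (norm (f x)) \<partial>\<mu>) + (\<Sum>a\<in>S. ennreal (M a) * ennreal (norm (f a)))"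
    using f sp by (intro nn_integral_add_masses) auto
  also have "\<dots> < \<infinity>"
    using f S by (simp add: integrable_iff_bounded ennreal_mult_less_top)
  finally show "(\<integral>\<^sup>+x. ennreal (norm (f x)) \<partial>add_masses \<mu> S M) < \<infinity>" .
qed

lemma integral_add_masses:
  fixes f :: "real \<Rightarrow> real"
  assumes f: "integrable \<mu> f" and sp: "space \<mu> = UNIV" and S: "finite S"
    and M: "\<And>a. a \<in> S \<Longrightarrow> M a \<ge> 0"
  shows "integral\<^sup>L (add_masses \<mu> S M) f = integral\<^sup>L \<mu> f + (\<Sum>a\<in>S. M a * f a)"
proof -
  have nn: "(\<integral>\<^sup>+x. ennreal (g x) \<partial>add_masses \<mu> S M) =
      (\<integral>\<^sup>+x. ennreal (g x) \<partial>\<mu>) + ennreal (\<Sum>a\<in>S. M a * max 0 (g a))"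
    if "g \<in> borel_measurable \<mu>" for g
    using nn_integral_add_masses[of "\<lambda>x. ennreal (g x)" \<mu> S M] that sp M
    by (simp add: sum_masses_ennreal)
  have fin: "(\<integral>\<^sup>+x. ennreal (f x) \<partial>\<mu>) < \<infinity>" "(\<integral>\<^sup>+x. ennreal (- f x) \<partial>\<mu>) < \<infinity>"
    using f by (simp_all add: real_integrable_def less_top)
  have max_0_minus_max_0: "max 0 r - max 0 (- r) = r" for r :: real
    by (simp add: max_def)
  have pos: "(\<Sum>a\<in>S. M a * max 0 (g a)) \<ge> 0" for g :: "real \<Rightarrow> real"
    using M by (intro sum_nonneg) simp
  have "integral\<^sup>L (add_masses \<mu> S M) f =
      enn2real (\<integral>\<^sup>+x. ennreal (f x) \<partial>add_masses \<mu> S M) -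
      enn2real (\<integral>\<^sup>+x. ennreal (- f x) \<partial>add_masses \<mu> S M)"
    using integrable_add_masses[OF f sp S] by (rule real_lebesgue_integral_def)
  also have "\<dots> = (enn2real (\<integral>\<^sup>+x. ennreal (f x) \<partial>\<mu>) + (\<Sum>a\<in>S. M a * max 0 (f a))) -
      (enn2real (\<integral>\<^sup>+x. ennreal (- f x) \<partial>\<mu>) + (\<Sum>a\<in>S. M a * max 0 (- f a)))"
    using f fin pos by (simp add: nn enn2real_plus)
  also have "\<dots> = integral\<^sup>L \<mu> f + ((\<Sum>a\<in>S. M a * max 0 (f a)) - (\<Sum>a\<in>S. M a * max 0 (- f a)))"
    using real_lebesgue_integral_def[OF f] by simp
  also have "(\<Sum>a\<in>S. M a * max 0 (f a)) - (\<Sum>a\<in>S. M a * max 0 (- f a)) = (\<Sum>a\<in>S. M a * f a)"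
    using max_0_minus_max_0 by (simp add: sum_subtractf[symmetric] right_diff_distrib[symmetric])
  finally show ?thesis .
qed

lemma integral_functional_add_masses:
  fixes \<mu> :: "real measure"
  assumes sets_mu: "sets \<mu> = sets borel" and moments: "\<And>k::nat. integrable \<mu> (\<lambda>x. x ^ k)"
    and S: "finite S" and M: "\<And>a. a \<in> S \<Longrightarrow> M a \<ge> 0"
  shows "integrable (add_masses \<mu> S M) (\<lambda>x. poly p x)"
    and "integral_functional (add_masses \<mu> S M) = add_masses_functional (integral_functional \<mu>) S M"
proof -
  have sp: "space \<mu> = UNIV"
    using sets_eq_imp_space_eq[OF sets_mu] by simp
  show "integrable (add_masses \<mu> S M) (\<lambda>x. poly p x)"
    using integrable_add_masses[OF integrable_poly[OF moments] sp S] .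
  show "integral_functional (add_masses \<mu> S M) = add_masses_functional (integral_functional \<mu>) S M"
    using integral_add_masses[OF integrable_poly[OF moments] sp S M]
    by (simp add: fun_eq_iff integral_functional_def add_masses_functional_def)
qed

lemma integral_functional_mod_measure:
  fixes \<mu> :: "real measure"
  assumes moments: "\<And>k::nat. integrable \<mu> (\<lambda>x. x ^ k)"
  shows "integrable (mod_measure \<mu> A) (\<lambda>x. poly p x)"
    and "integral_functional (mod_measure \<mu> A) p = mod_functional (integral_functional \<mu>) A p"
proof -
  define w where "w = (\<Prod>a\<in>A. [:-a, 1:]^2)"
  have w: "(\<Prod>a\<in>A. (x - a)^2) = poly w x" for x
    by (simp add: w_def poly_prod)
  have meas: "(\<lambda>x. poly q x) \<in> borel_measurable \<mu>" for q
    using integrable_poly[OF moments] by auto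
  have "integrable \<mu> (\<lambda>x. poly w x *\<^sub>R poly p x)"
    using integrable_poly[OF moments, of "w * p"] by simp
  then show "integrable (mod_measure \<mu> A) (\<lambda>x. poly p x)"
    unfolding mod_measure_def w by (subst integrable_density) (auto simp: meas w_def poly_prod prod_nonneg)
  have "integral_functional (mod_measure \<mu> A) p = integral\<^sup>L \<mu> (\<lambda>x. poly w x *\<^sub>R poly p x)"
    unfolding mod_measure_def w integral_functional_def
    by (subst integral_density) (auto simp: meas w_def poly_prod prod_nonneg)
  also have "\<dots> = mod_functional (integral_functional \<mu>) A p"
    by (simp add: mod_functional_def integral_functional_def w_def mult.commute)
  finally show "integral_functional (mod_measure \<mu> A) p = mod_functional (integral_functional \<mu>) A p" .
qed

lemma kernel_add_masses:
  fixes \<mu> :: "real measure"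
  assumes sets_mu: "sets \<mu> = sets borel" and incr: "infinite {x. point_of_increase \<mu> x}"
    and moments: "\<And>k::nat. integrable \<mu> (\<lambda>x. x ^ k)"
    and S: "finite S" and M: "\<And>a. a \<in> S \<Longrightarrow> M a \<ge> 0"
  shows "kernel (add_masses \<mu> S M) m x y =
           poly (reproducing_kernel (add_masses_functional (integral_functional \<mu>) S M) m x) y"
proof -
  have eq: "integral_functional (add_masses \<mu> S M) = add_masses_functional (integral_functional \<mu>) S M"
    using sets_mu moments S M by (rule integral_functional_add_masses(2))
  have "pos_def_functional (integral_functional (add_masses \<mu> S M))"
    unfolding eq using pos_def_integral_functional[OF sets_mu incr moments] M
    by (rule pos_def_add_masses_functional)
  from kernel_eq_reproducing_kernel[OF integral_functional_add_masses(1)[OF sets_mu moments S M] this]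
  show ?thesis
    unfolding eq .
qed

lemma kernel_mod_measure:
  fixes \<mu> :: "real measure"
  assumes sets_mu: "sets \<mu> = sets borel" and incr: "infinite {x. point_of_increase \<mu> x}"
    and moments: "\<And>k::nat. integrable \<mu> (\<lambda>x. x ^ k)" and A: "finite A"
  shows "kernel (mod_measure \<mu> A) m x y =
           poly (reproducing_kernel (mod_functional (integral_functional \<mu>) A) m x) y"
proof -
  have eq: "integral_functional (mod_measure \<mu> A) = mod_functional (integral_functional \<mu>) A"
    using integral_functional_mod_measure(2)[OF moments] by (simp add: fun_eq_iff)
  have "pos_def_functional (integral_functional (mod_measure \<mu> A))"
    unfolding eq using pos_def_integral_functional[OF sets_mu incr moments] A
    by (rule pos_def_mod_functional)
  from kernel_eq_reproducing_kernel[OF integral_functional_mod_measure(1)[OF moments] this]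
  show ?thesis
    unfolding eq .
qed

lemma mod_kernel_sum_integral_functional:
  fixes \<mu> :: "real measure"
  assumes sets_mu: "sets \<mu> = sets borel" and incr: "infinite {x. point_of_increase \<mu> x}"
    and moments: "\<And>k::nat. integrable \<mu> (\<lambda>x. x ^ k)" and S: "finite S"
  shows "mod_kernel_sum (integral_functional \<mu>) S C n x y =
           (\<Sum>A\<in>Pow S. C A * (\<Prod>a\<in>A. (x - a) * (y - a)) * kernel (mod_measure \<mu> A) (n - int (card A)) x y)"
proof -
  have "kernel (mod_measure \<mu> A) m x y =
      poly (reproducing_kernel (mod_functional (integral_functional \<mu>) A) m x) y" if "A \<in> Pow S" for A m
    using that S by (intro kernel_mod_measure[OF sets_mu incr moments]) (auto intro: finite_subset)
  then show ?thesis
    unfolding mod_kernel_sum_def by (intro sum.cong) auto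
qed

lemma pos_sum_eq_1_imp_less_1:
  fixes C :: "'a \<Rightarrow> real"
  assumes "finite I" "\<forall>i\<in>I. C i > 0" "sum C I = 1" "i \<in> I" "j \<in> I" "j \<noteq> i"
  shows "C i < 1"
proof -
  have "C i + C j = sum C {i, j}"
    using assms(6) by simp
  also have "\<dots> \<le> sum C I"
    using assms by (intro sum_mono2) auto
  finally show ?thesis
    using assms by auto
qed

theorem mainTheorem4:
  fixes \<mu> :: "real measure" and S :: "real set" and M :: "real \<Rightarrow> real" and n :: nat
  assumes sets_mu: "sets \<mu> = sets borel"
    and incr: "infinite {x. point_of_increase \<mu> x}"
    and moments: "\<And>k::nat. integrable \<mu> (\<lambda>x. x ^ k)"
    and finS: "finite S" and nonempty: "S \<noteq> {}"
    and no_atoms: "\<And>a. a \<in> S \<Longrightarrow> emeasure \<mu> {a} = 0"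
    and M_pos: "\<And>a. a \<in> S \<Longrightarrow> M a > 0"
  shows "\<exists>C :: real set \<Rightarrow> real.
           (\<forall>A \<in> Pow S. 0 < C A \<and> C A < 1) \<and>
           (\<Sum>A\<in>Pow S. C A) = 1 \<and>
           (\<forall>x y. kernel (add_masses \<mu> S M) (int n) x y =
              (\<Sum>A\<in>Pow S. C A * (\<Prod>a\<in>A. (x - a) * (y - a))
                  * kernel (mod_measure \<mu> A) (int n - int (card A)) x y))"
proof -
  let ?L = "integral_functional \<mu>"
  have M_nonneg: "\<And>a. a \<in> S \<Longrightarrow> M a \<ge> 0"
    using M_pos by (simp add: less_imp_le)
  have L: "pos_def_functional ?L"
    using sets_mu incr moments by (rule pos_def_integral_functional)
  obtain C where "kernel_decomposition ?L S M (int n) C"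
    using kernel_decomposition_exists[OF finS L] M_pos by blast
  then have pos: "\<forall>A\<in>Pow S. C A > 0" and sum1: "(\<Sum>A\<in>Pow S. C A) = 1"
    and decomp: "\<And>x y. poly (reproducing_kernel (add_masses_functional ?L S M) (int n) x) y =
      mod_kernel_sum ?L S C (int n) x y"
    by (simp_all add: kernel_decomposition_def)
  have "C A < 1" if "A \<in> Pow S" for A
    using pos_sum_eq_1_imp_less_1[OF _ pos sum1 that, of "if A = {} then S else {}"] finS nonempty
    by auto
  moreover have "kernel (add_masses \<mu> S M) (int n) x y =
      (\<Sum>A\<in>Pow S. C A * (\<Prod>a\<in>A. (x - a) * (y - a)) * kernel (mod_measure \<mu> A) (int n - int (card A)) x y)"
    for x y
    by (simp only: kernel_add_masses[OF sets_mu incr moments finS M_nonneg] decomp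
        mod_kernel_sum_integral_functional[OF sets_mu incr moments finS])
  ultimately show ?thesis
    using pos sum1 by blast
qed

end
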